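(* Let $\{|\psi_v^A\rangle\otimes|\psi_v^B\rangle\}_{v=1}^r$ be a set of mutually orthogonal product states in $\mathcal H_A\otimes\mathcal H_B$ (finite-dimensional, all factors nonzero) with graphs $G_A$ and $G_B$. If there exist an integer $k\ge1$ and a graph $G$ on the vertex set $\{1,\dots,r\}$ with $G_A\le G\le\overline{G_B}$ such that $G$ is a $k$-tree, then the states are perfectly distinguishable by one-way LOCC with Alice measuring first.
   Context: $G_A$ has vertex set $\{1,\dots,r\}$ with an edge $\{u,v\}$ ($u\ne v$) iff $\langle\psi_u^A|\psi_v^A\rangle\ne0$; $G_B$ likewise with Bob's vectors; $\overline{G}$ is the complement graph; for graphs on the same vertex set, $H\le G$ means the edge set of $H$ is contained in that of $G$. A vertex is simplicial if its neighbourhood induces a complete graph. A perfect elimination ordering of a graph $G$ on $n$ vertices is an ordering $v_1,\dots,v_n$ of its vertices such that each $v_i$ is simplicial in the subgraph induced by $\{v_i,\dots,v_n\}$. $G$ is a $k$-tree if it has a perfect elimination ordering $v_1,\dots,v_n$ such that (1) for all $i<n-k$, $v_i$ has degree exactly $k$ in the subgraph induced by $\{v_i,\dots,v_n\}$, and (2) the subgraph induced by $\{v_{n-k},\dots,v_n\}$ is a complete graph on $k+1$ vertices. One-way LOCC with Alice first: there exist positive semidefinite $Q_1,\dots,Q_N$ on $\mathcal H_A$ with $\sum_jQ_j=I$ and, for each $j$, positive semidefinite $R^{(j)}_1,\dots,R^{(j)}_r$ on $\mathcal H_B$ with $\sum_kR^{(j)}_k=I$, such that $\langle\psi_l|Q_j\otimes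 R^{(j)}_k|\psi_l\rangle=0$ for all $j$ and $k\ne l$. *)

theory Defs
  imports "HOL-Analysis.Analysis"
begin

text \<open>Finite-dimensional complex Hilbert spaces are modelled as complex^'a for a finite
index type 'a (automatically nonzero-dimensional). Operators are complex^'a^'a.\<close>

definition cinner :: "complex^'a::finite \<Rightarrow> complex^'a \<Rightarrow> complex" where
  "cinner x y = (\<Sum>i\<in>UNIV. cnj (x $ i) * y $ i)"

definition psd :: "complex^'a::finite^'a \<Rightarrow> bool" where
  "psd M \<longleftrightarrow> (\<forall>x. Im (cinner x (M *v x)) = 0 \<and> Re (cinner x (M *v x)) \<ge> 0)"

definition tensor_vec :: "complex^'a::finite \<Rightarrow> complex^'b::finite \<Rightarrow> complex^('a \<times> 'b)" where
  "tensor_vec x y = (\<chi> p. x $ fst p * y $ snd p)"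

definition tensor_mat :: "complex^'a::finite^'a \<Rightarrow> complex^'b::finite^'b \<Rightarrow> complex^('a \<times> 'b)^('a \<times> 'b)" where
  "tensor_mat A B = (\<chi> p q. A $ fst p $ fst q * B $ snd p $ snd q)"

definition graph_on :: "nat set \<Rightarrow> (nat \<Rightarrow> nat \<Rightarrow> bool) \<Rightarrow> bool" where
  "graph_on V G \<longleftrightarrow> (\<forall>u v. G u v \<longrightarrow> u \<in> V \<and> v \<in> V \<and> u \<noteq> v \<and> G v u)"

definition subgraph_le :: "(nat \<Rightarrow> nat \<Rightarrow> bool) \<Rightarrow> (nat \<Rightarrow> nat \<Rightarrow> bool) \<Rightarrow> bool" where
  "subgraph_le H G \<longleftrightarrow> (\<forall>u v. H u v \<longrightarrow> G u v)"

definition complement_graph :: "nat set \<Rightarrow> (nat \<Rightarrow> nat \<Rightarrow> bool) \<Rightarrow> nat \<Rightarrow> nat \<Rightarrow> bool" where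
  "complement_graph V G u v \<longleftrightarrow> u \<in> V \<and> v \<in> V \<and> u \<noteq> v \<and> \<not> G u v"

definition vec_graph :: "nat \<Rightarrow> (nat \<Rightarrow> complex^'a::finite) \<Rightarrow> nat \<Rightarrow> nat \<Rightarrow> bool" where
  "vec_graph r psi u v \<longleftrightarrow> u \<in> {1..r} \<and> v \<in> {1..r} \<and> u \<noteq> v \<and> cinner (psi u) (psi v) \<noteq> 0"

definition simplicial_in :: "(nat \<Rightarrow> nat \<Rightarrow> bool) \<Rightarrow> nat set \<Rightarrow> nat \<Rightarrow> bool" where
  "simplicial_in G S v \<longleftrightarrow>
     (\<forall>x\<in>S. \<forall>y\<in>S. G v x \<and> G v y \<and> x \<noteq> y \<longrightarrow> G x y)"

definition peo :: "nat set \<Rightarrow> (nat \<Rightarrow> nat \<Rightarrow> bool) \<Rightarrow> nat list \<Rightarrow> bool" where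
  "peo V G vs \<longleftrightarrow> distinct vs \<and> set vs = V \<and>
     (\<forall>i < length vs. simplicial_in G (set (drop i vs)) (vs ! i))"

text \<open>k-tree: 1-indexed condition i < n-k becomes 0-indexed j < n-k-1; the final block
  {v_{n-k},...,v_n} is set (drop (n-k-1) vs), required to be a complete graph on k+1 vertices.\<close>
definition k_tree :: "nat set \<Rightarrow> (nat \<Rightarrow> nat \<Rightarrow> bool) \<Rightarrow> nat \<Rightarrow> bool" where
  "k_tree V G k \<longleftrightarrow> (\<exists>vs. peo V G vs \<and>
     (let n = length vs in
       (\<forall>j. j < n - k - 1 \<longrightarrow> card {x \<in> set (drop j vs). G (vs ! j) x} = k) \<and>
       card (set (drop (n - k - 1) vs)) = k + 1 \<and>
       (\<forall>x \<in> set (drop (n - k - 1) vs). \<forall>y \<in> set (drop (n - k - 1) vs). x \<noteq> y \<longrightarrow> G x y)))"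

definition one_way_LOCC_A :: "nat \<Rightarrow> (nat \<Rightarrow> complex^'a::finite) \<Rightarrow> (nat \<Rightarrow> complex^'b::finite) \<Rightarrow> bool" where
  "one_way_LOCC_A r psiA psiB \<longleftrightarrow>
     (\<exists>(N::nat) (Q :: nat \<Rightarrow> complex^'a^'a) (R :: nat \<Rightarrow> nat \<Rightarrow> complex^'b^'b).
        (\<forall>j<N. psd (Q j)) \<and> (\<Sum>j<N. Q j) = mat 1 \<and>
        (\<forall>j<N. (\<forall>k\<in>{1..r}. psd (R j k)) \<and> (\<Sum>k\<in>{1..r}. R j k) = mat 1) \<and>
        (\<forall>j<N. \<forall>k\<in>{1..r}. \<forall>l\<in>{1..r}. k \<noteq> l \<longrightarrow>
           cinner (tensor_vec (psiA l) (psiB l))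
                  (tensor_mat (Q j) (R j k) *v tensor_vec (psiA l) (psiB l)) = 0))"

end

theory Submission
  imports Defs
begin

text \<open>Alice measures along a perfect elimination ordering v1, ..., vn of G. The rank-one
  projection onto Alice's state of v1 leaves only v1 and its neighbours as candidates, a clique
  since v1 is simplicial; on the complementary outcome all states are projected away from that
  state, which keeps the states of non-adjacent vertices orthogonal (again because v1 is
  simplicial), and the construction recurses along the ordering. So every outcome of Alice leaves
  a clique of G, i.e. an independent set of G_B: Bob's remaining states are pairwise orthogonal,
  and the same construction for the edgeless graph distinguishes them.\<close>

lemma cinner_commute: "cinner y x = cnj (cinner x y)"
  by (simp add: cinner_def mult.commute)

lemma cinner_add_right: "cinner x (y + z) = cinner x y + cinner x z"
  by (simp add: cinner_def sum.distrib distrib_left)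

lemma cinner_diff_right: "cinner x (y - z) = cinner x y - cinner x z"
  by (simp add: cinner_def sum_subtractf right_diff_distrib)

lemma cinner_diff_left: "cinner (y - z) x = cinner y x - cinner z x"
  by (simp add: cinner_def sum_subtractf left_diff_distrib)

lemma cinner_scale_right: "cinner x (c *s y) = c * cinner x y"
  by (simp add: cinner_def sum_distrib_left mult_ac)

lemma cinner_scale_left: "cinner (c *s x) y = cnj c * cinner x y"
  by (simp add: cinner_def sum_distrib_left mult_ac)

lemma cinner_zero_left [simp]: "cinner 0 y = 0"
  by (simp add: cinner_def)

lemma cinner_zero_right [simp]: "cinner x 0 = 0"
  by (simp add: cinner_def)

lemma cinner_sum_right: "finite S \<Longrightarrow> cinner x (\<Sum>i\<in>S. f i) = (\<Sum>i\<in>S. cinner x (f i))"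
  by (induction S rule: finite_induct) (auto simp: cinner_add_right)

lemma cinner_self: "cinner x x = of_real (\<Sum>i\<in>UNIV. (norm (x $ i))\<^sup>2)"
  unfolding cinner_def of_real_sum
  by (rule sum.cong[OF refl], subst complex_norm_square) (simp add: mult.commute)

lemma cinner_self_eq_0_iff: "cinner x x = 0 \<longleftrightarrow> x = 0"
proof
  assume "cinner x x = 0"
  then have "(\<Sum>i\<in>UNIV. (norm (x $ i))\<^sup>2) = 0"
    by (simp only: cinner_self of_real_eq_0_iff)
  then show "x = 0"
    by (simp add: sum_nonneg_eq_0_iff vec_eq_iff)
qed (simp add: cinner_def)

lemma tensor_mat_mult_tensor_vec: "tensor_mat A B *v tensor_vec x y = tensor_vec (A *v x) (B *v y)"
  by (simp add: vec_eq_iff matrix_vector_mult_def tensor_mat_def tensor_vec_def sum_product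
      UNIV_Times_UNIV[symmetric] sum.cartesian_product mult_ac case_prod_unfold del: UNIV_Times_UNIV)

lemma cinner_tensor_vec: "cinner (tensor_vec a b) (tensor_vec c d) = cinner a c * cinner b d"
  by (simp add: cinner_def tensor_vec_def sum_product
      UNIV_Times_UNIV[symmetric] sum.cartesian_product mult_ac case_prod_unfold del: UNIV_Times_UNIV)

lemma matrix_sum_mult_vector: "finite S \<Longrightarrow> (\<Sum>i\<in>S. M i) *v x = (\<Sum>i\<in>S. M i *v x)"
  by (induction S rule: finite_induct) (auto simp: matrix_vector_mult_add_rdistrib)

lemma matrix_add_rdistrib: "(A + B) ** C = A ** C + B ** C"
  by (simp add: matrix_eq matrix_vector_mul_assoc[symmetric] matrix_vector_mult_add_rdistrib)

lemma psd_add: "psd A \<Longrightarrow> psd B \<Longrightarrow> psd (A + B)"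
  by (simp add: psd_def matrix_vector_mult_add_rdistrib cinner_add_right)

lemma psd_zero: "psd 0"
  by (simp add: psd_def)

lemma psd_sum: "finite S \<Longrightarrow> (\<And>i. i \<in> S \<Longrightarrow> psd (M i)) \<Longrightarrow> psd (\<Sum>i\<in>S. M i)"
  by (induction S rule: finite_induct) (simp_all add: psd_add psd_zero)

lemma psd_mat_1: "psd (mat 1)"
  by (simp add: psd_def cinner_self sum_nonneg)

definition hermitian :: "complex^'a::finite^'a \<Rightarrow> bool" where
  "hermitian E \<longleftrightarrow> (\<forall>x y. cinner x (E *v y) = cinner (E *v x) y)"

lemma cinner_sandwich:
  "hermitian E \<Longrightarrow> cinner x ((E ** Q ** E) *v x) = cinner (E *v x) (Q *v (E *v x))"
  by (simp add: hermitian_def matrix_vector_mul_assoc[symmetric])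

lemma psd_sandwich: "hermitian E \<Longrightarrow> psd Q \<Longrightarrow> psd (E ** Q ** E)"
  by (simp add: psd_def cinner_sandwich)

lemma hermitian_diff: "hermitian A \<Longrightarrow> hermitian B \<Longrightarrow> hermitian (A - B)"
  by (simp add: hermitian_def matrix_vector_mult_diff_rdistrib cinner_diff_left cinner_diff_right)

lemma hermitian_mat_1: "hermitian (mat 1)"
  by (simp add: hermitian_def)

text \<open>Orthogonal projection onto the span of v; for v = 0 the division by zero makes it 0.\<close>
definition proj :: "complex^'a::finite \<Rightarrow> complex^'a^'a" where
  "proj v = (\<chi> i j. v $ i * cnj (v $ j) / cinner v v)"

lemma proj_mult: "proj v *v x = (cinner v x / cinner v v) *s v"
proof -
  have "(proj v *v x) $ i = (\<Sum>j\<in>UNIV. cnj (v $ j) * x $ j) / cinner v v * v $ i" for i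
    unfolding matrix_vector_mult_def proj_def sum_divide_distrib sum_distrib_right
    by (simp, rule sum.cong) (simp_all add: divide_inverse mult_ac)
  then show ?thesis
    by (simp add: vec_eq_iff cinner_def)
qed

lemma cinner_proj: "cinner x (proj v *v y) = cinner x v * cinner v y / cinner v v"
  by (simp add: proj_mult cinner_scale_right)

lemma proj_mult_self: "proj v *v v = v"
  by (cases "v = 0") (simp_all add: proj_mult cinner_self_eq_0_iff)

lemma psd_proj: "psd (proj v)"
proof -
  define S where "S = (\<Sum>i\<in>UNIV. (norm (v $ i))\<^sup>2)"
  have "cinner x (proj v *v x) = cinner x v * cnj (cinner x v) / cinner v v" for x
    by (simp add: cinner_proj cinner_commute[of v x])
  also have "\<dots> x = of_real ((norm (cinner x v))\<^sup>2 / S)" for x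
    by (simp only: complex_norm_square cinner_self S_def of_real_divide)
  finally have "cinner x (proj v *v x) = of_real ((norm (cinner x v))\<^sup>2 / S)" for x .
  moreover have "S \<ge> 0"
    by (simp add: S_def sum_nonneg)
  ultimately show ?thesis
    by (simp add: psd_def)
qed

lemma hermitian_proj: "hermitian (proj v)"
proof -
  have "cnj (cinner v v) = cinner v v"
    by (rule cinner_commute[symmetric])
  then have "cinner x (proj v *v y) = cinner (proj v *v x) y" for x y
    by (simp add: proj_mult cinner_scale_left cinner_scale_right cinner_commute[of v x] mult.commute)
  then show ?thesis
    by (simp add: hermitian_def)
qed

lemma proj_idem: "proj v *v (proj v *v x) = proj v *v x"
  by (cases "v = 0") (simp_all add: proj_mult cinner_scale_right cinner_self_eq_0_iff)

lemma hermitian_one_minus_proj: "hermitian (mat 1 - proj v)"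
  by (simp add: hermitian_diff hermitian_mat_1 hermitian_proj)

lemma one_minus_proj_idem: "(mat 1 - proj v) ** (mat 1 - proj v) = mat 1 - proj v"
  by (simp add: matrix_eq matrix_vector_mul_assoc[symmetric] matrix_vector_mult_diff_rdistrib
      matrix_vector_mult_diff_distrib proj_idem)

lemma one_minus_proj_mult_self: "(mat 1 - proj v) *v v = 0"
  by (simp add: matrix_vector_mult_diff_rdistrib proj_mult_self)

lemma cinner_one_minus_proj:
  "cinner x ((mat 1 - proj v) *v y) = cinner x y - cinner x v * cinner v y / cinner v v"
  by (simp add: matrix_vector_mult_diff_rdistrib cinner_diff_right cinner_proj)

lemma sum_list_map_sandwich: "sum_list (map (\<lambda>Q. E ** Q ** E) qs) = E ** sum_list qs ** E"
  by (induction qs) (simp_all add: matrix_add_ldistrib matrix_add_rdistrib)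

definition is_povm :: "(complex^'a::finite^'a) list \<Rightarrow> bool" where
  "is_povm qs \<longleftrightarrow> (\<forall>Q\<in>set qs. psd Q) \<and> sum_list qs = mat 1"

lemma is_povm_Cons_sandwich:
  assumes "psd P" "hermitian E" "E ** E = E" "P + E = mat 1" "is_povm qs"
  shows "is_povm (P # map (\<lambda>Q. E ** Q ** E) qs)"
  using assms by (auto simp: is_povm_def psd_sandwich sum_list_map_sandwich)

lemma is_povm_coarse_graining:
  assumes "is_povm qs" "finite K" "\<forall>i<length qs. f i \<in> K"
  shows "psd (\<Sum>i\<in>{i\<in>{..<length qs}. f i = k}. qs ! i)"
    and "(\<Sum>k\<in>K. \<Sum>i\<in>{i\<in>{..<length qs}. f i = k}. qs ! i) = mat 1"
proof -
  show "psd (\<Sum>i\<in>{i\<in>{..<length qs}. f i = k}. qs ! i)"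
    using assms(1) by (intro psd_sum) (auto simp: is_povm_def)
  have "(\<Sum>k\<in>K. \<Sum>i\<in>{i\<in>{..<length qs}. f i = k}. qs ! i) = (\<Sum>i<length qs. qs ! i)"
    using assms(2,3) by (intro sum.group) auto
  also have "\<dots> = mat 1"
    using assms(1) by (simp add: is_povm_def sum_list_sum_nth atLeast0LessThan)
  finally show "(\<Sum>k\<in>K. \<Sum>i\<in>{i\<in>{..<length qs}. f i = k}. qs ! i) = mat 1" .
qed

definition is_clique :: "(nat \<Rightarrow> nat \<Rightarrow> bool) \<Rightarrow> nat set \<Rightarrow> bool" where
  "is_clique G S \<longleftrightarrow> (\<forall>l\<in>S. \<forall>m\<in>S. l \<noteq> m \<longrightarrow> G l m)"

definition nonadjacent_orthogonal ::
    "(nat \<Rightarrow> nat \<Rightarrow> bool) \<Rightarrow> nat set \<Rightarrow> (nat \<Rightarrow> complex^'a::finite) \<Rightarrow> bool" where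
  "nonadjacent_orthogonal G V psi \<longleftrightarrow>
     (\<forall>l\<in>V. \<forall>m\<in>V. l \<noteq> m \<longrightarrow> \<not> G l m \<longrightarrow> cinner (psi l) (psi m) = 0)"

definition detected :: "complex^'a::finite^'a \<Rightarrow> (nat \<Rightarrow> complex^'a) \<Rightarrow> nat set \<Rightarrow> nat set" where
  "detected Q psi V = {l\<in>V. cinner (psi l) (Q *v psi l) \<noteq> 0}"

lemma is_clique_detected_proj:
  assumes "simplicial_in G V v" "v \<in> V" "nonadjacent_orthogonal G V psi"
  shows "is_clique G (detected (proj (psi v)) psi V)"
  unfolding is_clique_def
proof (intro ballI impI)
  fix l m assume l: "l \<in> detected (proj (psi v)) psi V" and m: "m \<in> detected (proj (psi v)) psi V"
    and "l \<noteq> m"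
  have adjacent: "G u w" if "u \<in> V" "w \<in> V" "u \<noteq> w" "cinner (psi u) (psi w) \<noteq> 0" for u w
    using assms(3) that unfolding nonadjacent_orthogonal_def by blast
  have nonzero: "u \<in> V" "cinner (psi u) (psi v) \<noteq> 0" "cinner (psi v) (psi u) \<noteq> 0"
    if "u \<in> detected (proj (psi v)) psi V" for u
    using that by (auto simp: detected_def cinner_proj)
  consider "l = v" | "m = v" | "l \<noteq> v" "m \<noteq> v"
    by blast
  then show "G l m"
  proof cases
    case 1
    then show ?thesis
      using adjacent[of v m] nonzero[OF m] \<open>l \<noteq> m\<close> assms(2) by blast
  next
    case 2
    then show ?thesis
      using adjacent[of l v] nonzero[OF l] \<open>l \<noteq> m\<close> assms(2) by blast
  next
    case 3
    then have "G v l" "G v m"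
      using adjacent nonzero[OF l] nonzero[OF m] assms(2) by blast+
    then show ?thesis
      using assms(1) nonzero(1)[OF l] nonzero(1)[OF m] \<open>l \<noteq> m\<close> unfolding simplicial_in_def by blast
  qed
qed

lemma nonadjacent_orthogonal_one_minus_proj:
  assumes "simplicial_in G V v" "v \<in> V" "nonadjacent_orthogonal G V psi"
  shows "nonadjacent_orthogonal G V (\<lambda>l. (mat 1 - proj (psi v)) *v psi l)"
  unfolding nonadjacent_orthogonal_def
proof (intro ballI impI)
  fix l m assume lm: "l \<in> V" "m \<in> V" "l \<noteq> m" "\<not> G l m"
  define E where "E = mat 1 - proj (psi v)"
  have "cinner x (E *v y) = cinner (E *v x) y" for x y
    using hermitian_one_minus_proj unfolding E_def hermitian_def by blast
  then have "cinner (E *v psi l) (E *v psi m) = cinner (psi l) ((E ** E) *v psi m)"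
    by (simp add: matrix_vector_mul_assoc[symmetric])
  also have "\<dots> = cinner (psi l) (psi m) - cinner (psi l) (psi v) * cinner (psi v) (psi m) / cinner (psi v) (psi v)"
    by (simp add: E_def one_minus_proj_idem cinner_one_minus_proj)
  finally have E_inner: "cinner (E *v psi l) (E *v psi m) = \<dots>" .
  show "cinner (E *v psi l) (E *v psi m) = 0"
  proof (cases "l = v \<or> m = v")
    case True
    then show ?thesis
      by (auto simp: E_def one_minus_proj_mult_self)
  next
    case False
    have orth: "cinner (psi u) (psi w) = 0" if "u \<in> V" "w \<in> V" "u \<noteq> w" "\<not> G u w" for u w
      using assms(3) that unfolding nonadjacent_orthogonal_def by blast
    have "cinner (psi l) (psi v) = 0 \<or> cinner (psi v) (psi m) = 0"
    proof (rule ccontr)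
      assume "\<not> ?thesis"
      then have "cinner (psi v) (psi l) \<noteq> 0" "cinner (psi v) (psi m) \<noteq> 0"
        by (auto simp: cinner_commute[of "psi l"])
      then have "G v l" "G v m"
        using orth lm False assms(2) by blast+
      then show False
        using assms(1) lm unfolding simplicial_in_def by blast
    qed
    then show ?thesis
      using E_inner orth[OF lm] by auto
  qed
qed

lemma clique_povm_exists:
  fixes psi :: "nat \<Rightarrow> complex^'a::finite"
  assumes "\<forall>i<length vs. simplicial_in G (set (drop i vs)) (vs ! i)"
    and "nonadjacent_orthogonal G (set vs) psi"
  shows "\<exists>qs. is_povm qs \<and> (\<forall>Q\<in>set qs. is_clique G (detected Q psi (set vs)))"
  using assms
proof (induction vs arbitrary: psi)
  case Nil
  show ?case
    by (intro exI[of _ "[mat 1]"]) (simp add: is_povm_def psd_mat_1 is_clique_def detected_def)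
next
  case (Cons v ws)
  define P where "P = proj (psi v)"
  define E where "E = mat 1 - P"
  define psi' where "psi' l = E *v psi l" for l
  have v_simplicial: "simplicial_in G (set (v # ws)) v"
    using Cons.prems(1) by force
  have "\<forall>i<length ws. simplicial_in G (set (drop i ws)) (ws ! i)"
    using Cons.prems(1) by force
  moreover have "nonadjacent_orthogonal G (set ws) psi'"
    using nonadjacent_orthogonal_one_minus_proj[OF v_simplicial _ Cons.prems(2)]
    unfolding nonadjacent_orthogonal_def psi'_def E_def P_def by simp
  ultimately obtain qs where qs: "is_povm qs" "\<forall>Q\<in>set qs. is_clique G (detected Q psi' (set ws))"
    using Cons.IH by blast
  have "hermitian E"
    by (simp add: E_def P_def hermitian_one_minus_proj)
  have "is_povm (P # map (\<lambda>Q. E ** Q ** E) qs)"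
    using qs(1) \<open>hermitian E\<close>
    by (intro is_povm_Cons_sandwich) (simp_all add: P_def E_def psd_proj one_minus_proj_idem)
  moreover have "is_clique G (detected (E ** Q ** E) psi (set (v # ws)))" if "Q \<in> set qs" for Q
  proof -
    have "detected (E ** Q ** E) psi (set (v # ws)) \<subseteq> detected Q psi' (set ws)"
      using \<open>hermitian E\<close>
      by (auto simp: detected_def cinner_sandwich psi'_def E_def P_def one_minus_proj_mult_self)
    then show ?thesis
      using qs(2) that unfolding is_clique_def by blast
  qed
  moreover have "is_clique G (detected P psi (set (v # ws)))"
    unfolding P_def using v_simplicial Cons.prems(2) by (intro is_clique_detected_proj) auto
  ultimately show ?case
    by (intro exI[of _ "P # map (\<lambda>Q. E ** Q ** E) qs"]) auto
qed

lemma orthogonal_states_distinguishable: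
  fixes psi :: "nat \<Rightarrow> complex^'a::finite"
  assumes "finite K" "k0 \<in> K" "S \<subseteq> K"
    and "\<forall>l\<in>S. \<forall>m\<in>S. l \<noteq> m \<longrightarrow> cinner (psi l) (psi m) = 0"
  shows "\<exists>R. (\<forall>k\<in>K. psd (R k)) \<and> (\<Sum>k\<in>K. R k) = mat 1 \<and>
           (\<forall>k\<in>K. \<forall>l\<in>S. k \<noteq> l \<longrightarrow> cinner (psi l) (R k *v psi l) = 0)"
proof -
  have "finite S"
    using assms(1,3) finite_subset by blast
  then have "\<exists>qs. is_povm qs \<and> (\<forall>Q\<in>set qs. is_clique (\<lambda>_ _. False) (detected Q psi S))"
    using clique_povm_exists[of "sorted_list_of_set S" "\<lambda>_ _. False" psi] assms(4)
    by (simp add: simplicial_in_def nonadjacent_orthogonal_def)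
  then obtain qs where qs: "is_povm qs" "\<forall>Q\<in>set qs. is_clique (\<lambda>_ _. False) (detected Q psi S)"
    by blast
  define label where
    "label i = (if detected (qs ! i) psi S = {} then k0 else (SOME l. l \<in> detected (qs ! i) psi S))" for i
  have detected_label: "label i = l" if "i < length qs" "l \<in> detected (qs ! i) psi S" for i l
  proof -
    have "label i \<in> detected (qs ! i) psi S"
      using that(2) unfolding label_def by (auto intro: someI)
    moreover have "is_clique (\<lambda>_ _. False) (detected (qs ! i) psi S)"
      using qs(2) nth_mem[OF that(1)] by blast
    ultimately show ?thesis
      using that(2) unfolding is_clique_def by blast
  qed
  have "label i \<in> K" for i
    using assms(2,3) someI_ex[of "\<lambda>l. l \<in> detected (qs ! i) psi S"]
    by (auto simp: label_def detected_def)
  define R where "R k = (\<Sum>i\<in>{i\<in>{..<length qs}. label i = k}. qs ! i)" for k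
  have "cinner (psi l) (R k *v psi l) = 0" if "l \<in> S" "k \<noteq> l" for k l
  proof -
    have "cinner (psi l) (R k *v psi l) = (\<Sum>i\<in>{i\<in>{..<length qs}. label i = k}. cinner (psi l) (qs ! i *v psi l))"
      by (simp add: R_def matrix_sum_mult_vector cinner_sum_right)
    also have "\<dots> = 0"
      using detected_label that by (intro sum.neutral) (auto simp: detected_def)
    finally show ?thesis .
  qed
  with is_povm_coarse_graining[OF qs(1) assms(1), of label] \<open>\<And>i. label i \<in> K\<close> show ?thesis
    by (intro exI[of _ R]) (auto simp: R_def)
qed

lemma one_way_LOCC_A_of_clique_povm:
  fixes psiA :: "nat \<Rightarrow> complex^'a::finite" and psiB :: "nat \<Rightarrow> complex^'b::finite"
  assumes "is_povm qs" "\<forall>Q\<in>set qs. is_clique G (detected Q psiA {1..r})" "1 \<le> r"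
    and "\<forall>l\<in>{1..r}. \<forall>m\<in>{1..r}. G l m \<longrightarrow> cinner (psiB l) (psiB m) = 0"
  shows "one_way_LOCC_A r psiA psiB"
proof -
  have "\<forall>j\<in>{..<length qs}. \<exists>R. (\<forall>k\<in>{1..r}. psd (R k)) \<and> (\<Sum>k\<in>{1..r}. R k) = mat 1 \<and>
           (\<forall>k\<in>{1..r}. \<forall>l\<in>detected (qs ! j) psiA {1..r}. k \<noteq> l \<longrightarrow> cinner (psiB l) (R k *v psiB l) = 0)"
    (is "\<forall>j\<in>_. \<exists>R. ?distinguishes j R")
  proof
    fix j assume "j \<in> {..<length qs}"
    then have "is_clique G (detected (qs ! j) psiA {1..r})"
      using assms(2) by simp
    then show "\<exists>R. ?distinguishes j R"
      using assms(3,4) by (intro orthogonal_states_distinguishable) (auto simp: detected_def is_clique_def)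
  qed
  from bchoice[OF this] obtain R where R: "\<forall>j\<in>{..<length qs}.
      (\<forall>k\<in>{1..r}. psd (R j k)) \<and> (\<Sum>k\<in>{1..r}. R j k) = mat 1 \<and>
      (\<forall>k\<in>{1..r}. \<forall>l\<in>detected (qs ! j) psiA {1..r}. k \<noteq> l \<longrightarrow> cinner (psiB l) (R j k *v psiB l) = 0)"
    ..
  show ?thesis
    unfolding one_way_LOCC_A_def
  proof (intro exI[of _ "length qs"] exI[of _ "(!) qs"] exI[of _ R] conjI)
    show "\<forall>j<length qs. psd (qs ! j)" "(\<Sum>j<length qs. qs ! j) = mat 1"
      using assms(1) by (simp_all add: is_povm_def sum_list_sum_nth atLeast0LessThan)
    show "\<forall>j<length qs. (\<forall>k\<in>{1..r}. psd (R j k)) \<and> (\<Sum>k\<in>{1..r}. R j k) = mat 1"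
      using R by simp
    show "\<forall>j<length qs. \<forall>k\<in>{1..r}. \<forall>l\<in>{1..r}. k \<noteq> l \<longrightarrow>
            cinner (tensor_vec (psiA l) (psiB l)) (tensor_mat (qs ! j) (R j k) *v tensor_vec (psiA l) (psiB l)) = 0"
    proof (intro allI impI ballI)
      fix j k l assume "j < length qs" "k \<in> {1..r}" "l \<in> {1..r}" "k \<noteq> l"
      then have "cinner (psiB l) (R j k *v psiB l) = 0" if "l \<in> detected (qs ! j) psiA {1..r}"
        using R that by blast
      with \<open>l \<in> {1..r}\<close> show "cinner (tensor_vec (psiA l) (psiB l))
          (tensor_mat (qs ! j) (R j k) *v tensor_vec (psiA l) (psiB l)) = 0"
        by (cases "l \<in> detected (qs ! j) psiA {1..r}")
          (auto simp: tensor_mat_mult_tensor_vec cinner_tensor_vec detected_def)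
    qed
  qed
qed

lemma k_tree_peo: "k_tree V G k \<Longrightarrow> \<exists>vs. peo V G vs \<and> vs \<noteq> []"
  unfolding k_tree_def Let_def by force

theorem mainTheorem6:
  fixes r :: nat
    and psiA :: "nat \<Rightarrow> complex^'a::finite"
    and psiB :: "nat \<Rightarrow> complex^'b::finite"
    and G :: "nat \<Rightarrow> nat \<Rightarrow> bool"
    and k :: nat
  assumes unitA: "\<forall>v\<in>{1..r}. cinner (psiA v) (psiA v) = 1"
    and unitB: "\<forall>v\<in>{1..r}. cinner (psiB v) (psiB v) = 1"
    and orth: "\<forall>u\<in>{1..r}. \<forall>v\<in>{1..r}. u \<noteq> v \<longrightarrow>
                 cinner (tensor_vec (psiA u) (psiB u)) (tensor_vec (psiA v) (psiB v)) = 0"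
    and k_pos: "k \<ge> 1"
    and G_graph: "graph_on {1..r} G"
    and GA_le: "subgraph_le (vec_graph r psiA) G"
    and le_coGB: "subgraph_le G (complement_graph {1..r} (vec_graph r psiB))"
    and ktree: "k_tree {1..r} G k"
  shows "one_way_LOCC_A r psiA psiB"
proof -
  obtain vs where vs: "peo {1..r} G vs" "vs \<noteq> []"
    using k_tree_peo[OF ktree] by blast
  then have "set vs = {1..r}"
    unfolding peo_def by simp
  with vs(2) have "1 \<le> r"
    by (metis atLeastatMost_empty_iff set_empty)
  moreover have "nonadjacent_orthogonal G {1..r} psiA"
    using GA_le unfolding nonadjacent_orthogonal_def subgraph_le_def vec_graph_def by blast
  ultimately obtain qs where "is_povm qs" "\<forall>Q\<in>set qs. is_clique G (detected Q psiA {1..r})"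
    using clique_povm_exists[of vs G psiA] vs(1) unfolding peo_def by auto
  moreover have "\<forall>l\<in>{1..r}. \<forall>m\<in>{1..r}. G l m \<longrightarrow> cinner (psiB l) (psiB m) = 0"
    using le_coGB by (auto simp: subgraph_le_def complement_graph_def vec_graph_def)
  ultimately show ?thesis
    using one_way_LOCC_A_of_clique_povm \<open>1 \<le> r\<close> by blast
qed

end
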